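(* Let $K$ be a field, $X$ a finite connected poset, $\varphi$ an elementary Lie automorphism of $I(X,K)$ and $\theta=\theta_\varphi$. For any maximal chain $u_1<u_2<\dots<u_m$ in $X$ there exists a maximal chain $v_1<v_2<\dots<v_m$ in $X$ such that either (1) $\theta(e_{u_iu_j})=e_{v_iv_j}$ for all $1\le i<j\le m$, or (2) $\theta(e_{u_iu_j})=e_{v_{m-j+1}v_{m-i+1}}$ for all $1\le i<j\le m$.
   Context: $I(X,K)$ is the incidence algebra: functions $f:X\times X\to K$ with $f(x,y)=0$ unless $x\le y$, product $(fg)(x,y)=\sum_{x\le t\le y}f(x,t)g(t,y)$; $e_{xy}$ ($x\le y$) is the basis element equal to $1$ at $(x,y)$ and $0$ elsewhere. $B=\{e_{xy}:x<y\}$. A Lie automorphism is a bijective linear map preserving $[f,g]=fg-gf$. With $l(\lfloor x,y\rfloor)$ the maximal length of a chain in $\{z:x\le z\le y\}$ and $L_i=\mathrm{span}_K\{e_{xy}:l(\lfloor x,y\rfloor)=i\}$, for a Lie automorphism $\psi$ let $\widetilde\psi$ send $e_{xy}\in L_i$ to the $L_i$-component of $\psi(e_{xy})$. A Lie automorphism $\varphi$ is elementary if $\varphi=\widetilde\psi$ for some Lie automorphism $\psi$. For elementary $\varphi$, for each $x<y$ there are a unique $e_{uv}\in B$ and $k\in K^*$ with $\varphi(e_{xy})=k e_{uv}$; set $\theta_\varphi(e_{xy})=e_{uv}$. Connected means any two elements are joined by a sequence in which consecutive elements are in a covering relation. *)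

theory Defs
  imports Main
begin

text \<open>The poset is a finite carrier set X of an ordered type 'a, with the induced order.
Elements of the incidence algebra I(X,K) are represented as functions 'a => 'a => 'k
vanishing outside {(x,y). x \<in> X, y \<in> X, x \<le> y}.\<close>

definition incidence :: "'a::order set \<Rightarrow> ('a \<Rightarrow> 'a \<Rightarrow> 'k::field) set" where
  "incidence X = {f. \<forall>x y. f x y \<noteq> 0 \<longrightarrow> x \<in> X \<and> y \<in> X \<and> x \<le> y}"

definition inc_mult :: "'a::order set \<Rightarrow> ('a \<Rightarrow> 'a \<Rightarrow> 'k::field) \<Rightarrow> ('a \<Rightarrow> 'a \<Rightarrow> 'k) \<Rightarrow> ('a \<Rightarrow> 'a \<Rightarrow> 'k)" where
  "inc_mult X f g = (\<lambda>x y. \<Sum>t\<in>{t\<in>X. x \<le> t \<and> t \<le> y}. f x t * g t y)"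

definition lie_bracket :: "'a::order set \<Rightarrow> ('a \<Rightarrow> 'a \<Rightarrow> 'k::field) \<Rightarrow> ('a \<Rightarrow> 'a \<Rightarrow> 'k) \<Rightarrow> ('a \<Rightarrow> 'a \<Rightarrow> 'k)" where
  "lie_bracket X f g = (\<lambda>x y. inc_mult X f g x y - inc_mult X g f x y)"

definition inc_e :: "'a \<Rightarrow> 'a \<Rightarrow> ('a \<Rightarrow> 'a \<Rightarrow> 'k::field)" where
  "inc_e x y = (\<lambda>a b. if a = x \<and> b = y then 1 else 0)"

definition is_lie_aut :: "'a::order set \<Rightarrow> (('a \<Rightarrow> 'a \<Rightarrow> 'k::field) \<Rightarrow> ('a \<Rightarrow> 'a \<Rightarrow> 'k)) \<Rightarrow> bool" where
  "is_lie_aut X \<psi> \<longleftrightarrow>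
     bij_betw \<psi> (incidence X) (incidence X) \<and>
     (\<forall>f\<in>incidence X. \<forall>g\<in>incidence X. \<psi> (\<lambda>x y. f x y + g x y) = (\<lambda>x y. \<psi> f x y + \<psi> g x y)) \<and>
     (\<forall>f\<in>incidence X. \<forall>c. \<psi> (\<lambda>x y. c * f x y) = (\<lambda>x y. c * \<psi> f x y)) \<and>
     (\<forall>f\<in>incidence X. \<forall>g\<in>incidence X. \<psi> (lie_bracket X f g) = lie_bracket X (\<psi> f) (\<psi> g))"

definition is_chain :: "'a::order set \<Rightarrow> bool" where
  "is_chain C \<longleftrightarrow> (\<forall>a\<in>C. \<forall>b\<in>C. a \<le> b \<or> b \<le> a)"

definition int_length :: "'a::order set \<Rightarrow> 'a \<Rightarrow> 'a \<Rightarrow> nat" where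
  "int_length X x y = Max {card C - 1 | C. C \<subseteq> {z\<in>X. x \<le> z \<and> z \<le> y} \<and> is_chain C}"

text \<open>\<open>\<psi>~\<close>: sends e_xy to the L_{l(x,y)}-component of \<open>\<psi>(e_xy)\<close>, extended linearly.\<close>
definition tilde :: "'a::order set \<Rightarrow> (('a \<Rightarrow> 'a \<Rightarrow> 'k::field) \<Rightarrow> ('a \<Rightarrow> 'a \<Rightarrow> 'k)) \<Rightarrow> ('a \<Rightarrow> 'a \<Rightarrow> 'k) \<Rightarrow> ('a \<Rightarrow> 'a \<Rightarrow> 'k)" where
  "tilde X \<psi> f = (\<lambda>u v. \<Sum>p\<in>{(x,y). x \<in> X \<and> y \<in> X \<and> x \<le> y}.
      f (fst p) (snd p) *
      (if int_length X u v = int_length X (fst p) (snd p) then \<psi> (inc_e (fst p) (snd p)) u v else 0))"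

definition elementary :: "'a::order set \<Rightarrow> (('a \<Rightarrow> 'a \<Rightarrow> 'k::field) \<Rightarrow> ('a \<Rightarrow> 'a \<Rightarrow> 'k)) \<Rightarrow> bool" where
  "elementary X \<phi> \<longleftrightarrow> is_lie_aut X \<phi> \<and>
     (\<exists>\<psi>. is_lie_aut X \<psi> \<and> (\<forall>f\<in>incidence X. \<phi> f = tilde X \<psi> f))"

text \<open>\<open>\<theta>_\<phi>(e_xy) = e_uv\<close>, represented by the pair (u,v).\<close>
definition theta :: "'a::order set \<Rightarrow> (('a \<Rightarrow> 'a \<Rightarrow> 'k::field) \<Rightarrow> ('a \<Rightarrow> 'a \<Rightarrow> 'k)) \<Rightarrow> 'a \<Rightarrow> 'a \<Rightarrow> 'a \<times> 'a" where
  "theta X \<phi> x y = (THE p. fst p \<in> X \<and> snd p \<in> X \<and> fst p < snd p \<and>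
      (\<exists>k::'k. k \<noteq> 0 \<and> \<phi> (inc_e x y) = (\<lambda>a b. k * inc_e (fst p) (snd p) a b)))"

definition covers :: "'a::order set \<Rightarrow> 'a \<Rightarrow> 'a \<Rightarrow> bool" where
  "covers X x y \<longleftrightarrow> x \<in> X \<and> y \<in> X \<and> x < y \<and> \<not> (\<exists>z\<in>X. x < z \<and> z < y)"

definition poset_connected :: "'a::order set \<Rightarrow> bool" where
  "poset_connected X \<longleftrightarrow>
     (\<forall>x\<in>X. \<forall>y\<in>X. (\<lambda>a b. covers X a b \<or> covers X b a)\<^sup>*\<^sup>* x y)"

definition maximal_chain :: "'a::order set \<Rightarrow> 'a list \<Rightarrow> bool" where
  "maximal_chain X us \<longleftrightarrow> sorted_wrt (<) us \<and> set us \<subseteq> X \<and>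
     (\<forall>C. C \<subseteq> X \<and> is_chain C \<and> set us \<subseteq> C \<longrightarrow> C = set us)"

end

theory Submission
  imports Defs
begin

text \<open>
  An elementary Lie automorphism phi sends each e_xy with x < y to a nonzero multiple of a
  single e_uv with l(u,v) = l(x,y): every idempotent e_uu has a diagonal preimage, so phi(e_xy)
  is an eigenvector of each [e_uu, -], which confines its support to one entry. Since
  [e_xy, e_yz] = e_xz, the images of e_xy and e_yz compose, in one order or the other, to the
  image of e_xz; along a chain this forces one global orientation and yields the points v_i.
  They form a maximal chain because theta preserves interval length, hence coverings, and
  because theta is onto while [e_xy, e_x'y'] = 0 unless the two intervals meet end to end,
  which makes the end points extremal.
\<close>

section \<open>Products of matrix units\<close>

lemma inc_e_in_incidence:
  "x \<in> X \<Longrightarrow> y \<in> X \<Longrightarrow> x \<le> y \<Longrightarrow> inc_e x y \<in> incidence X"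
  unfolding incidence_def inc_e_def by auto

lemma inc_e_same [simp]: "inc_e x y x y = 1"
  by (simp add: inc_e_def)

lemma zero_in_incidence: "(\<lambda>a b. 0) \<in> incidence X"
  unfolding incidence_def by auto

lemma inc_mult_scale:
  "inc_mult X (\<lambda>s t. k * f s t) (\<lambda>s t. k' * g s t) = (\<lambda>s t. k * k' * inc_mult X f g s t)"
  unfolding inc_mult_def by (simp add: sum_distrib_left ac_simps)

lemma lie_bracket_scale:
  "lie_bracket X (\<lambda>s t. k * f s t) (\<lambda>s t. k' * g s t) = (\<lambda>s t. k * k' * lie_bracket X f g s t)"
  unfolding lie_bracket_def inc_mult_scale by (simp add: algebra_simps)

lemma inc_mult_inc_e:
  assumes "finite X"
  shows "inc_mult X (inc_e a b) (inc_e c d) s t =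
    (if s = a \<and> t = d \<and> b = c \<and> b \<in> X \<and> a \<le> b \<and> b \<le> d then 1 else 0)"
proof -
  have "inc_mult X (inc_e a b) (inc_e c d) s t =
     (\<Sum>r\<in>{r\<in>X. s \<le> r \<and> r \<le> t}. if b = r then (if s = a \<and> b = c \<and> t = d then 1 else 0) else 0)"
    unfolding inc_mult_def inc_e_def by (rule sum.cong) auto
  also have "\<dots> = (if s = a \<and> t = d \<and> b = c \<and> b \<in> X \<and> a \<le> b \<and> b \<le> d then 1 else 0)"
    using assms by (subst sum.delta') auto
  finally show ?thesis .
qed

lemma lie_bracket_inc_e_nonzero:
  assumes "finite X" "lie_bracket X (inc_e a b) (inc_e c d) s t \<noteq> 0"
  shows "(s = a \<and> t = d \<and> b = c) \<or> (s = c \<and> t = b \<and> d = a)"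
  using assms(2) unfolding lie_bracket_def inc_mult_inc_e[OF assms(1)] by (auto split: if_splits)

lemma lie_bracket_inc_e_chain:
  assumes "finite X" "x < y" "y < z" "y \<in> X"
  shows "lie_bracket X (inc_e x y) (inc_e y z) = inc_e x z"
  using assms unfolding lie_bracket_def fun_eq_iff inc_mult_inc_e[OF assms(1)]
  by (auto simp: inc_e_def)

lemma lie_bracket_inc_e_apart:
  assumes "finite X" "y \<noteq> x'" "y' \<noteq> x"
  shows "lie_bracket X (inc_e x y) (inc_e x' y') = (\<lambda>s t. 0)"
  using assms unfolding lie_bracket_def fun_eq_iff inc_mult_inc_e[OF assms(1)] by auto

lemma lie_bracket_diagonal_inc_e:
  assumes "finite X" "\<And>a b. a \<noteq> b \<Longrightarrow> g a b = 0" "x \<in> X" "y \<in> X" "x \<le> y"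
  shows "lie_bracket X g (inc_e x y) = (\<lambda>s t. (g x x - g y y) * inc_e x y s t)"
proof -
  have gx: "inc_mult X g (inc_e x y) a b =
      (\<Sum>r\<in>{r\<in>X. a \<le> r \<and> r \<le> b}. if x = r then (if a = x \<and> b = y then g x x else 0) else 0)"
    and xg: "inc_mult X (inc_e x y) g a b =
      (\<Sum>r\<in>{r\<in>X. a \<le> r \<and> r \<le> b}. if y = r then (if a = x \<and> b = y then g y y else 0) else 0)"
    for a b
    unfolding inc_mult_def inc_e_def using assms(2) by (intro sum.cong; auto)+
  show ?thesis
    unfolding lie_bracket_def fun_eq_iff gx xg using assms(1,3-5)
    by (auto simp: inc_e_def)
qed

lemma lie_bracket_idempotent_left:
  assumes "finite X" "f \<in> incidence X" "u \<in> X"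
  shows "lie_bracket X (inc_e u u) f =
    (\<lambda>s t. ((if s = u then 1 else 0) - (if t = u then 1 else 0)) * f s t)"
proof -
  have uf: "inc_mult X (inc_e u u) f a b =
      (\<Sum>r\<in>{r\<in>X. a \<le> r \<and> r \<le> b}. if u = r then (if a = u then f u b else 0) else 0)"
    and fu: "inc_mult X f (inc_e u u) a b =
      (\<Sum>r\<in>{r\<in>X. a \<le> r \<and> r \<le> b}. if u = r then (if b = u then f a u else 0) else 0)"
    for a b
    unfolding inc_mult_def inc_e_def by (intro sum.cong; auto)+
  show ?thesis
    unfolding lie_bracket_def fun_eq_iff uf fu using assms by (auto simp: incidence_def)
qed

section \<open>Interval length\<close>

lemma int_length_finite:
  assumes "finite X"
  shows "finite {card C - 1 | C. C \<subseteq> {z\<in>X. x \<le> z \<and> z \<le> y} \<and> is_chain C}"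
proof -
  have "{card C - 1 | C. C \<subseteq> {z\<in>X. x \<le> z \<and> z \<le> y} \<and> is_chain C}
      \<subseteq> (\<lambda>C. card C - 1) ` Pow {z\<in>X. x \<le> z \<and> z \<le> y}" by auto
  moreover have "finite (Pow {z\<in>X. x \<le> z \<and> z \<le> y})" using assms by simp
  ultimately show ?thesis by (meson finite_imageI finite_subset)
qed

lemma int_length_ge:
  assumes "finite X" "C \<subseteq> {z\<in>X. x \<le> z \<and> z \<le> y}" "is_chain C"
  shows "card C - 1 \<le> int_length X x y"
  unfolding int_length_def using assms by (intro Max_ge int_length_finite) auto

lemma int_length_le:
  assumes "finite X" "\<And>C. C \<subseteq> {z\<in>X. x \<le> z \<and> z \<le> y} \<Longrightarrow> is_chain C \<Longrightarrow> card C - 1 \<le> n"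
  shows "int_length X x y \<le> n"
proof -
  have "card {} - 1 \<in> {card C - 1 | C. C \<subseteq> {z\<in>X. x \<le> z \<and> z \<le> y} \<and> is_chain C}"
    by (auto simp: is_chain_def intro!: exI[of _ "{}"])
  then show ?thesis
    unfolding int_length_def using assms by (subst Max_le_iff[OF int_length_finite]) auto
qed

lemma int_length_refl:
  assumes "finite X"
  shows "int_length X a a = 0"
proof -
  have "card C \<le> 1" if "C \<subseteq> {z\<in>X. a \<le> z \<and> z \<le> a}" for C
    using card_mono[of "{a}" C] that by fastforce
  then show ?thesis using int_length_le[OF assms, of a a 0] by fastforce
qed

lemma int_length_pos:
  assumes "finite X" "a \<in> X" "b \<in> X" "a < b"
  shows "0 < int_length X a b"
  using int_length_ge[OF assms(1), of "{a, b}" a b] assms by (force simp: is_chain_def)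

lemma int_length_eq_1_iff_covers:
  assumes "finite X" "a \<in> X" "b \<in> X" "a < b"
  shows "int_length X a b = 1 \<longleftrightarrow> covers X a b"
proof
  assume l: "int_length X a b = 1"
  show "covers X a b"
  proof (unfold covers_def, intro conjI notI assms(2-4))
    assume "\<exists>z\<in>X. a < z \<and> z < b"
    then obtain z where z: "z \<in> X" "a < z" "z < b" by blast
    then have "card {a, z, b} - 1 \<le> int_length X a b"
      using assms by (intro int_length_ge) (auto simp: is_chain_def)
    moreover have "card {a, z, b} = 3"
      using z(2,3) by (simp add: order.strict_implies_not_eq order.strict_trans)
    ultimately show False using l by simp
  qed
next
  assume "covers X a b"
  have "card C - 1 \<le> 1" if "C \<subseteq> {z\<in>X. a \<le> z \<and> z \<le> b}" for C
  proof -
    have "C \<subseteq> {a, b}" using that \<open>covers X a b\<close> unfolding covers_def by fastforce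
    then have "card C \<le> card {a, b}" by (intro card_mono) auto
    then show ?thesis using assms(4) by simp
  qed
  then have "int_length X a b \<le> 1" by (intro int_length_le[OF assms(1)])
  then show "int_length X a b = 1" using int_length_pos[OF assms] by simp
qed

section \<open>Maximal chains\<close>

lemma sorted_wrt_less_comparable:
  fixes us :: "'a::order list"
  shows "sorted_wrt (<) us \<Longrightarrow> x \<in> set us \<Longrightarrow> y \<in> set us \<Longrightarrow> x \<le> y \<or> y \<le> x"
  by (induction us) (auto intro: less_imp_le)

lemma sorted_wrt_less_nth_mono:
  fixes us :: "'a::order list"
  assumes "sorted_wrt (<) us" "i \<le> j" "j < length us"
  shows "us ! i \<le> us ! j"
  using sorted_wrt_nth_less[OF assms(1), of i j] assms(2,3) by (cases "i = j") auto

lemma sorted_wrt_less_hd_last: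
  fixes us :: "'a::order list"
  assumes "sorted_wrt (<) us" "x \<in> set us"
  shows "hd us \<le> x" "x \<le> last us"
proof -
  obtain k where k: "k < length us" "x = us ! k" using assms(2) by (metis in_set_conv_nth)
  have "us ! 0 \<le> us ! k" "us ! k \<le> us ! (length us - 1)"
    using k(1) by (auto intro: sorted_wrt_less_nth_mono[OF assms(1)])
  moreover have "us \<noteq> []" using assms(2) by auto
  ultimately show "hd us \<le> x" "x \<le> last us"
    using k(2) by (simp_all add: hd_conv_nth last_conv_nth)
qed

lemma maximal_chain_iff:
  "maximal_chain X us \<longleftrightarrow> sorted_wrt (<) us \<and> set us \<subseteq> X \<and>
     (\<forall>z\<in>X. (\<forall>x\<in>set us. x \<le> z \<or> z \<le> x) \<longrightarrow> z \<in> set us)"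
proof (intro iffI conjI ballI impI)
  assume mc: "maximal_chain X us"
  then show sorted: "sorted_wrt (<) us" and X: "set us \<subseteq> X"
    unfolding maximal_chain_def by simp_all
  fix z assume z: "z \<in> X" "\<forall>x\<in>set us. x \<le> z \<or> z \<le> x"
  have "is_chain (insert z (set us))"
    using z(2) sorted_wrt_less_comparable[OF sorted] unfolding is_chain_def by fast
  then have "insert z (set us) = set us"
    using mc X z(1) unfolding maximal_chain_def by (meson insert_subset subset_insertI)
  then show "z \<in> set us" by blast
next
  assume rhs: "sorted_wrt (<) us \<and> set us \<subseteq> X \<and> (\<forall>z\<in>X. (\<forall>x\<in>set us. x \<le> z \<or> z \<le> x) \<longrightarrow> z \<in> set us)"
  show "maximal_chain X us" unfolding maximal_chain_def
  proof (intro conjI allI impI)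
    show "sorted_wrt (<) us" "set us \<subseteq> X" using rhs by simp_all
    fix C assume C: "C \<subseteq> X \<and> is_chain C \<and> set us \<subseteq> C"
    have "C \<subseteq> set us"
    proof
      fix z assume "z \<in> C"
      then have "\<forall>x\<in>set us. x \<le> z \<or> z \<le> x" using C unfolding is_chain_def by fast
      then show "z \<in> set us" using rhs \<open>z \<in> C\<close> C by fast
    qed
    then show "C = set us" using C by (intro subset_antisym) simp_all
  qed
qed

lemma maximal_chain_mem:
  assumes "maximal_chain X us" "z \<in> X" "\<And>x. x \<in> set us \<Longrightarrow> x \<le> z \<or> z \<le> x"
  shows "z \<in> set us"
  using assms unfolding maximal_chain_iff by simp

lemma maximal_chain_hd_minimal:
  assumes "maximal_chain X us" "us \<noteq> []"
  shows "\<forall>z\<in>X. \<not> z < hd us"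
proof (intro ballI notI)
  fix z assume "z \<in> X" "z < hd us"
  moreover have sorted: "sorted_wrt (<) us" using assms(1) by (simp add: maximal_chain_iff)
  ultimately have "z \<in> set us"
    using sorted_wrt_less_hd_last(1)[OF sorted] by (intro maximal_chain_mem[OF assms(1) \<open>z \<in> X\<close>]) force
  then show False using \<open>z < hd us\<close> sorted_wrt_less_hd_last(1)[OF sorted] by force
qed

lemma maximal_chain_last_maximal:
  assumes "maximal_chain X us" "us \<noteq> []"
  shows "\<forall>z\<in>X. \<not> last us < z"
proof (intro ballI notI)
  fix z assume "z \<in> X" "last us < z"
  moreover have sorted: "sorted_wrt (<) us" using assms(1) by (simp add: maximal_chain_iff)
  ultimately have "z \<in> set us"
    using sorted_wrt_less_hd_last(2)[OF sorted] by (intro maximal_chain_mem[OF assms(1) \<open>z \<in> X\<close>]) force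
  then show False using \<open>last us < z\<close> sorted_wrt_less_hd_last(2)[OF sorted] by force
qed

lemma maximal_chain_covers:
  assumes "maximal_chain X us" "Suc i < length us"
  shows "covers X (us ! i) (us ! Suc i)"
proof -
  have sorted: "sorted_wrt (<) us" and X: "set us \<subseteq> X"
    using assms(1) by (simp_all add: maximal_chain_iff)
  have between: "us ! k \<le> us ! i \<or> us ! Suc i \<le> us ! k" if "k < length us" for k
  proof (cases "k \<le> i")
    case True
    then show ?thesis using sorted_wrt_less_nth_mono[OF sorted, of k i] assms(2) by simp
  next
    case False
    then show ?thesis using sorted_wrt_less_nth_mono[OF sorted, of "Suc i" k] that by simp
  qed
  have "False" if z: "z \<in> X" "us ! i < z" "z < us ! Suc i" for z
  proof -
    have "z \<in> set us"
    proof (rule maximal_chain_mem[OF assms(1) z(1)])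
      fix x assume "x \<in> set us"
      then obtain k where "k < length us" "x = us ! k" by (auto simp: in_set_conv_nth)
      then show "x \<le> z \<or> z \<le> x" using between z(2,3) by force
    qed
    then obtain k where "k < length us" "z = us ! k" by (auto simp: in_set_conv_nth)
    then show False using between z(2,3) by force
  qed
  moreover have "us ! i \<in> X" "us ! Suc i \<in> X" using X assms(2) by auto
  moreover have "us ! i < us ! Suc i" using sorted_wrt_nth_less[OF sorted, of i "Suc i"] assms(2) by simp
  ultimately show ?thesis unfolding covers_def by blast
qed

lemma maximal_chainI_covers:
  assumes "us \<noteq> []" "set us \<subseteq> X"
    and minimal: "\<forall>z\<in>X. \<not> z < hd us" and maximal: "\<forall>z\<in>X. \<not> last us < z"
    and covers: "\<forall>i. Suc i < length us \<longrightarrow> covers X (us ! i) (us ! Suc i)"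
  shows "maximal_chain X us"
proof -
  have sorted: "sorted_wrt (<) us"
    using covers unfolding sorted_wrt_iff_nth_Suc_transp[OF transp_on_less] covers_def by blast
  have "z \<in> set us" if z: "z \<in> X" "\<forall>x\<in>set us. x \<le> z \<or> z \<le> x" for z
  proof -
    define I where "I = {i. i < length us \<and> us ! i \<le> z}"
    define i where "i = Max I"
    have "hd us \<le> z" using z minimal assms(1) by (metis hd_in_set order.not_eq_order_implies_strict)
    then have "0 \<in> I" using assms(1) unfolding I_def by (simp add: hd_conv_nth)
    moreover have "finite I" unfolding I_def by simp
    ultimately have i: "i \<in> I" "\<And>j. j \<in> I \<Longrightarrow> j \<le> i"
      unfolding i_def by (auto intro: Max_in Max_ge)
    show ?thesis
    proof (rule ccontr)
      assume "z \<notin> set us"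
      moreover have "us ! i \<le> z" "i < length us" using i(1) unfolding I_def by auto
      ultimately have lt: "us ! i < z" by (metis nth_mem order.not_eq_order_implies_strict)
      show False
      proof (cases "Suc i < length us")
        case True
        then have "\<not> us ! Suc i \<le> z" using i(2)[of "Suc i"] unfolding I_def by auto
        moreover have "z \<le> us ! Suc i" using z(2) True calculation by (meson nth_mem)
        ultimately have "z < us ! Suc i" by (simp add: order.strict_iff_not)
        then show False using covers True lt z(1) unfolding covers_def by blast
      next
        case False
        then have "i = length us - 1" using \<open>i < length us\<close> by linarith
        then have "last us = us ! i" using assms(1) by (simp add: last_conv_nth)
        then show False using maximal lt z(1) by auto
      qed
    qed
  qed
  with sorted assms(2) show ?thesis unfolding maximal_chain_iff by blast
qed

section \<open>Orienting composable pairs\<close>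

text \<open>Abstracts t i j = theta(e_{u_i u_j}) along a chain u: compose is what [e_xy, e_yz] = e_xz
  leaves of the images.\<close>

locale composable_pairs =
  fixes t :: "nat \<Rightarrow> nat \<Rightarrow> 'b \<times> 'b" and m :: nat
  assumes distinct: "i < j \<Longrightarrow> j < m \<Longrightarrow> fst (t i j) \<noteq> snd (t i j)"
    and compose: "i < j \<Longrightarrow> j < k \<Longrightarrow> k < m \<Longrightarrow>
      (snd (t i j) = fst (t j k) \<and> t i k = (fst (t i j), snd (t j k))) \<or>
      (snd (t j k) = fst (t i j) \<and> t i k = (fst (t j k), snd (t i j)))"
begin

definition forward_on :: "nat \<Rightarrow> (nat \<Rightarrow> 'b) \<Rightarrow> bool" where
  "forward_on n w \<longleftrightarrow> (\<forall>i j. i < j \<and> j < n \<longrightarrow> t i j = (w i, w j))"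

definition backward_on :: "nat \<Rightarrow> (nat \<Rightarrow> 'b) \<Rightarrow> bool" where
  "backward_on n w \<longleftrightarrow> (\<forall>i j. i < j \<and> j < n \<longrightarrow> t i j = (w j, w i))"

lemma swap: "composable_pairs (\<lambda>i j. prod.swap (t i j)) m"
proof
  show "fst (prod.swap (t i j)) \<noteq> snd (prod.swap (t i j))" if "i < j" "j < m" for i j
    using distinct[OF that] by simp
  show "(snd (prod.swap (t i j)) = fst (prod.swap (t j k)) \<and>
      prod.swap (t i k) = (fst (prod.swap (t i j)), snd (prod.swap (t j k)))) \<or>
    (snd (prod.swap (t j k)) = fst (prod.swap (t i j)) \<and>
      prod.swap (t i k) = (fst (prod.swap (t j k)), snd (prod.swap (t i j))))"
    if "i < j" "j < k" "k < m" for i j k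
    using compose[OF that] by (auto simp: prod_eq_iff)
qed

lemma forward_onD: "forward_on n w \<Longrightarrow> i < j \<Longrightarrow> j < n \<Longrightarrow> t i j = (w i, w j)"
  unfolding forward_on_def by blast

lemma forward_on_extend:
  assumes n: "2 \<le> n" "n < m" and w: "forward_on n w" and a: "fst (t (n - 1) n) = w (n - 1)"
  shows "forward_on (Suc n) (w(n := snd (t (n - 1) n)))"
  unfolding forward_on_def
proof (intro allI impI)
  define q where "q = n - 1"
  obtain b where b: "t q n = (w q, b)" using a unfolding q_def by (metis prod.collapse)
  have last: "t i n = (w i, b)" if "i \<le> q" for i
  proof (cases "i = q")
    case False
    then have "i < q" "q < n" using that n(1) unfolding q_def by simp_all
    then have "t i n = (w i, b) \<or> t i n = (w q, w q)"
      using compose[of i q n] forward_onD[OF w, of i q] b n(2) by auto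
    moreover have "fst (t i n) \<noteq> snd (t i n)" using distinct[of i n] \<open>i < q\<close> \<open>q < n\<close> n(2) by simp
    ultimately show ?thesis by auto
  qed (use b in simp)
  fix i j assume ij: "i < j \<and> j < Suc n"
  show "t i j = ((w(n := snd (t (n - 1) n))) i, (w(n := snd (t (n - 1) n))) j)"
  proof (cases "j < n")
    case True
    then show ?thesis using forward_onD[OF w] ij by simp
  next
    case False
    then have "j = n" "i \<le> q" using ij unfolding q_def by auto
    then show ?thesis using last[of i] b ij unfolding q_def by simp
  qed
qed

lemma forward_extend:
  assumes n: "2 \<le> n" "n < m" and w: "forward_on n w"
  shows "(\<exists>w. forward_on (Suc n) w) \<or> (\<exists>w. backward_on (Suc n) w)"
proof -
  obtain p where p: "n = Suc (Suc p)" using n(1) by (metis add_2_eq_Suc le_Suc_ex)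
  define q where "q = Suc p"
  note tw = forward_onD[OF w]
  obtain a b where ab: "t q n = (a, b)" by fastforce
  have "a \<noteq> b" using distinct[of q n] ab n(2) p q_def by simp
  have "t p q = (w p, w q)" using tw p q_def by simp
  then have "(w q = a \<and> t p n = (w p, b)) \<or> (b = w p \<and> t p n = (a, w q))"
    using compose[of p q n] ab p q_def n(2) by simp
  then consider (forward) "w q = a" | (backward) "b = w p" "t p n = (a, w q)"
    by blast
  then show ?thesis
  proof cases
    case forward
    then have "fst (t (n - 1) n) = w (n - 1)" using ab p q_def by simp
    then show ?thesis using forward_on_extend[OF n w] by blast
  next
    case backward
    show ?thesis
    proof (cases p)
      case 0
      have t01: "t 0 1 = (w 0, w 1)" using tw p 0 by simp
      have t12: "t 1 2 = (a, w 0)" and t02: "t 0 2 = (a, w 1)"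
        using ab backward p q_def 0 by (simp_all add: numeral_2_eq_2)
      have "backward_on (Suc n) (\<lambda>i. if i = 0 then w 1 else if i = 1 then w 0 else a)"
        unfolding backward_on_def
      proof (intro allI impI)
        fix i j assume "i < j \<and> j < Suc n"
        then consider "i = 0" "j = 1" | "i = 0" "j = 2" | "i = 1" "j = 2"
          using p 0 by linarith
        then show "t i j = ((\<lambda>i. if i = 0 then w 1 else if i = 1 then w 0 else a) j,
            (\<lambda>i. if i = 0 then w 1 else if i = 1 then w 0 else a) i)"
          using t01 t12 t02 by cases simp_all
      qed
      then show ?thesis by blast
    next
      case (Suc r)
      \<comment> \<open>A reversal cannot start after three points: composing (r, p) with (p, n)
        would force a = b or w r = w q.\<close>
      have "r < p" "p < n" using Suc p by simp_all
      then have "snd (t r p) = fst (t p n) \<or> snd (t p n) = fst (t r p)"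
        using compose[of r p n] n(2) by blast
      moreover have "t r p = (w r, w p)" using tw p Suc by simp
      ultimately have "w p = a \<or> w q = w r" using backward(2) by auto
      moreover have "w r \<noteq> w q" using distinct[of r q] tw p q_def Suc n(2) by simp
      ultimately show ?thesis using backward(1) \<open>a \<noteq> b\<close> by simp
    qed
  qed
qed

lemma backward_extend:
  assumes n: "2 \<le> n" "n < m" and w: "backward_on n w"
  shows "(\<exists>w. forward_on (Suc n) w) \<or> (\<exists>w. backward_on (Suc n) w)"
proof -
  interpret swapped: composable_pairs "\<lambda>i j. prod.swap (t i j)" m by (rule swap)
  have swap_eq: "prod.swap p = (x, y) \<longleftrightarrow> p = (y, x)" for p :: "'b \<times> 'b" and x y
    by (auto simp: prod_eq_iff)
  have swapped_forward: "swapped.forward_on k v \<longleftrightarrow> backward_on k v" for k v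
    unfolding swapped.forward_on_def backward_on_def swap_eq ..
  have swapped_backward: "swapped.backward_on k v \<longleftrightarrow> forward_on k v" for k v
    unfolding swapped.backward_on_def forward_on_def swap_eq ..
  show ?thesis
    using swapped.forward_extend[OF n, of w] w unfolding swapped_forward swapped_backward by blast
qed

lemma forward_or_backward:
  assumes "n \<le> m"
  shows "(\<exists>w. forward_on n w) \<or> (\<exists>w. backward_on n w)"
  using assms
proof (induction n)
  case 0
  have "forward_on 0 w" for w unfolding forward_on_def by simp
  then show ?case by blast
next
  case (Suc n)
  show ?case
  proof (cases "n < 2")
    case True
    have "forward_on (Suc n) (\<lambda>i. if i = 0 then fst (t 0 1) else snd (t 0 1))"
      unfolding forward_on_def
    proof (intro allI impI)
      fix i j assume "i < j \<and> j < Suc n"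
      then have "i = 0" "j = 1" using True by linarith+
      then show "t i j = ((\<lambda>i. if i = 0 then fst (t 0 1) else snd (t 0 1)) i,
          (\<lambda>i. if i = 0 then fst (t 0 1) else snd (t 0 1)) j)" by simp
    qed
    then show ?thesis by blast
  next
    case False
    then have n: "2 \<le> n" "n < m" using Suc.prems by simp_all
    then have "(\<exists>w. forward_on n w) \<or> (\<exists>w. backward_on n w)" using Suc.IH by simp
    then show ?thesis using forward_extend[OF n] backward_extend[OF n] by blast
  qed
qed

end

section \<open>Elementary Lie automorphisms\<close>

lemma theta_eqI:
  assumes "\<phi> (inc_e x y) = (\<lambda>s t. k * inc_e a b s t)" "k \<noteq> 0" "a \<in> X" "b \<in> X" "a < b"
  shows "theta X \<phi> x y = (a, b)"
  unfolding theta_def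
proof (rule the_equality)
  show "fst (a, b) \<in> X \<and> snd (a, b) \<in> X \<and> fst (a, b) < snd (a, b) \<and>
    (\<exists>k. k \<noteq> 0 \<and> \<phi> (inc_e x y) = (\<lambda>s t. k * inc_e (fst (a, b)) (snd (a, b)) s t))"
    using assms by auto
next
  fix p :: "'a \<times> 'a"
  assume "fst p \<in> X \<and> snd p \<in> X \<and> fst p < snd p \<and>
    (\<exists>k. k \<noteq> 0 \<and> \<phi> (inc_e x y) = (\<lambda>s t. k * inc_e (fst p) (snd p) s t))"
  then obtain k' where "(\<lambda>s t. k * inc_e a b s t) = (\<lambda>s t. k' * inc_e (fst p) (snd p) s t)"
    using assms(1) by auto
  then have "k * inc_e a b a b = k' * inc_e (fst p) (snd p) a b" by metis
  then show "p = (a, b)" using assms(2) by (auto simp: inc_e_def prod_eq_iff split: if_splits)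
qed

locale elementary_lie_aut =
  fixes X :: "'a::order set" and \<phi> \<psi> :: "('a \<Rightarrow> 'a \<Rightarrow> 'k::field) \<Rightarrow> ('a \<Rightarrow> 'a \<Rightarrow> 'k)"
  assumes finite: "finite X" and lie_aut: "is_lie_aut X \<phi>"
    and tilde: "\<And>f. f \<in> incidence X \<Longrightarrow> \<phi> f = tilde X \<psi> f"
begin

lemma bij: "bij_betw \<phi> (incidence X) (incidence X)"
  using lie_aut unfolding is_lie_aut_def by blast

lemma scale: "f \<in> incidence X \<Longrightarrow> \<phi> (\<lambda>x y. c * f x y) = (\<lambda>x y. c * \<phi> f x y)"
  using lie_aut unfolding is_lie_aut_def by blast

lemma bracket:
  "f \<in> incidence X \<Longrightarrow> g \<in> incidence X \<Longrightarrow> \<phi> (lie_bracket X f g) = lie_bracket X (\<phi> f) (\<phi> g)"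
  using lie_aut unfolding is_lie_aut_def by blast

lemma maps_incidence: "f \<in> incidence X \<Longrightarrow> \<phi> f \<in> incidence X"
  using bij by (rule bij_betw_apply)

lemma inj: "f \<in> incidence X \<Longrightarrow> g \<in> incidence X \<Longrightarrow> \<phi> f = \<phi> g \<Longrightarrow> f = g"
  using bij by (meson bij_betw_def inj_onD)

lemma surj: "g \<in> incidence X \<Longrightarrow> \<exists>f\<in>incidence X. \<phi> f = g"
  using bij by (metis bij_betw_def imageE)

lemma zero: "\<phi> (\<lambda>a b. 0) = (\<lambda>a b. 0)"
  using scale[OF zero_in_incidence, of 0] by simp

lemma inc_e_apply:
  assumes "x \<in> X" "y \<in> X" "x \<le> y"
  shows "\<phi> (inc_e x y) u v = (if int_length X u v = int_length X x y then \<psi> (inc_e x y) u v else 0)"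
proof -
  have "\<phi> (inc_e x y) u v = tilde X \<psi> (inc_e x y) u v"
    using tilde[OF inc_e_in_incidence[OF assms]] by simp
  also have "\<dots> = (\<Sum>p\<in>{(x, y). x \<in> X \<and> y \<in> X \<and> x \<le> y}. if (x, y) = p then
     (if int_length X u v = int_length X (fst p) (snd p) then \<psi> (inc_e (fst p) (snd p)) u v else 0) else 0)"
    unfolding tilde_def by (rule sum.cong) (auto simp: inc_e_def)
  also have "\<dots> = (if int_length X u v = int_length X x y then \<psi> (inc_e x y) u v else 0)"
    using assms finite by (subst sum.delta') (auto intro: finite_subset[of _ "X \<times> X"])
  finally show ?thesis .
qed

lemma expansion:
  assumes "g \<in> incidence X"
  shows "\<phi> g u v =
    (\<Sum>p\<in>{(x, y). x \<in> X \<and> y \<in> X \<and> x \<le> y}. g (fst p) (snd p) * \<phi> (inc_e (fst p) (snd p)) u v)"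
  using tilde[OF assms] unfolding tilde_def by (auto intro!: sum.cong simp: inc_e_apply)

lemma inc_e_support:
  assumes "x \<in> X" "y \<in> X" "x \<le> y" "\<phi> (inc_e x y) u v \<noteq> 0"
  shows "int_length X u v = int_length X x y" "u \<in> X" "v \<in> X" "u \<le> v"
proof -
  show "int_length X u v = int_length X x y" using assms inc_e_apply by (auto split: if_splits)
  show "u \<in> X" "v \<in> X" "u \<le> v"
    using maps_incidence[OF inc_e_in_incidence[OF assms(1-3)]] assms(4) unfolding incidence_def by auto
qed

lemma inc_e_refl_off_diagonal:
  assumes "p \<in> X" "s \<noteq> t"
  shows "\<phi> (inc_e p p) s t = 0"
proof (rule ccontr)
  assume "\<phi> (inc_e p p) s t \<noteq> 0"
  note st = inc_e_support[OF assms(1) assms(1) order_refl this]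
  then show False
    using int_length_pos[OF finite st(2,3)] int_length_refl[OF finite] assms(2) by (simp add: less_le)
qed

lemma inc_e_less_on_diagonal:
  assumes "x \<in> X" "y \<in> X" "x < y"
  shows "\<phi> (inc_e x y) s s = 0"
  using inc_e_support(1)[OF assms(1,2) less_imp_le[OF assms(3)], of s s]
    int_length_pos[OF finite assms] int_length_refl[OF finite] by auto

lemma diagonal_preimage:
  assumes "u \<in> X"
  obtains g where "g \<in> incidence X" "\<And>a b. a \<noteq> b \<Longrightarrow> g a b = 0" "\<phi> g = inc_e u u"
proof -
  obtain g where g: "g \<in> incidence X" "\<phi> g = inc_e u u"
    using surj[OF inc_e_in_incidence[OF assms assms order_refl]] by blast
  define g0 where "g0 = (\<lambda>a b. if a = b then 0 else g a b)"
  have g0: "g0 \<in> incidence X" using g(1) unfolding g0_def incidence_def by auto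
  have "\<phi> g0 s t = 0" for s t
  proof (cases "s = t")
    case True
    then show ?thesis unfolding expansion[OF g0]
      by (intro sum.neutral) (auto simp: g0_def less_le inc_e_less_on_diagonal)
  next
    case False
    have "\<phi> g0 s t = \<phi> g s t" unfolding expansion[OF g0] expansion[OF g(1)]
      by (rule sum.cong) (auto simp: g0_def inc_e_refl_off_diagonal False)
    also have "\<dots> = 0" using g(2) False by (auto simp: inc_e_def)
    finally show ?thesis .
  qed
  then have "g0 = (\<lambda>a b. 0)" using inj[OF g0 zero_in_incidence] zero by auto
  then have "g a b = 0" if "a \<noteq> b" for a b
    using that unfolding g0_def by (metis (mono_tags))
  with g show thesis by (intro that)
qed

lemma inc_e_eigenvector:
  assumes "x \<in> X" "y \<in> X" "x < y" "u \<in> X"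
  obtains c where "\<And>s t. ((if s = u then 1 else 0) - (if t = u then 1 else 0)) * \<phi> (inc_e x y) s t
    = c * \<phi> (inc_e x y) s t"
proof -
  obtain g where g: "g \<in> incidence X" "\<And>a b. a \<noteq> b \<Longrightarrow> g a b = 0" "\<phi> g = inc_e u u"
    using diagonal_preimage[OF assms(4)] by blast
  have exy: "inc_e x y \<in> incidence X" using assms by (intro inc_e_in_incidence) auto
  have "lie_bracket X (inc_e u u) (\<phi> (inc_e x y)) = \<phi> (lie_bracket X g (inc_e x y))"
    using bracket[OF g(1) exy] g(3) by simp
  also have "\<dots> = (\<lambda>s t. (g x x - g y y) * \<phi> (inc_e x y) s t)"
    using lie_bracket_diagonal_inc_e[OF finite g(2) assms(1,2)] assms(3) scale[OF exy] by simp
  finally show thesis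
    using that[of "g x x - g y y"]
    unfolding lie_bracket_idempotent_left[OF finite maps_incidence[OF exy] assms(4)] fun_eq_iff by blast
qed

lemma inc_e_monomial:
  assumes "x \<in> X" "y \<in> X" "x < y"
  obtains k a b where "k \<noteq> 0" "a \<in> X" "b \<in> X" "a < b" "\<phi> (inc_e x y) = (\<lambda>s t. k * inc_e a b s t)"
proof -
  define f where "f = \<phi> (inc_e x y)"
  have exy: "inc_e x y \<in> incidence X" using assms by (intro inc_e_in_incidence) auto
  have "f \<noteq> (\<lambda>a b. 0)"
  proof
    assume "f = (\<lambda>a b. 0)"
    then have "inc_e x y = (\<lambda>a b. 0 :: 'k)" using inj[OF exy zero_in_incidence] zero unfolding f_def by simp
    then show False by (metis inc_e_def zero_neq_one)
  qed
  then obtain a b where ab: "f a b \<noteq> 0" by blast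
  note ab_props = inc_e_support[OF assms(1,2) less_imp_le[OF assms(3)], folded f_def, OF ab]
  have off_diagonal: "s \<noteq> t" if "f s t \<noteq> 0" for s t
    using that inc_e_less_on_diagonal[OF assms] unfolding f_def by auto
  have "a < b" using ab_props(4) off_diagonal[OF ab] by simp
  \<comment> \<open>For u = a, b the eigenvalue of [e_uu, -] on f is nonzero (look at entry (a, b)),
    so every entry in the support of f has exactly one index equal to u.\<close>
  have touches: "(s = u) \<noteq> (t = u)" if st: "f s t \<noteq> 0" and u: "u \<in> {a, b}" for s t u
  proof -
    obtain c where c: "\<And>s t. ((if s = u then 1 else 0) - (if t = u then 1 else 0)) * f s t = c * f s t"
      using inc_e_eigenvector[OF assms, of u] u ab_props(2,3) unfolding f_def by blast
    have "c \<noteq> 0" using c[of a b] ab u off_diagonal[OF ab] by auto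
    then show ?thesis using c[of s t] st by (auto split: if_splits)
  qed
  have support: "s = a \<and> t = b" if "f s t \<noteq> 0" for s t
  proof -
    have "s \<le> t" using inc_e_support(4)[OF assms(1,2) less_imp_le[OF assms(3)]] that unfolding f_def by blast
    then show ?thesis using touches[OF that, of a] touches[OF that, of b] \<open>a < b\<close> by auto
  qed
  have "f = (\<lambda>s t. f a b * inc_e a b s t)"
    using support by (auto simp: inc_e_def fun_eq_iff)
  then show thesis using that ab ab_props(2,3) \<open>a < b\<close> unfolding f_def by blast
qed

lemma inc_e_theta:
  assumes "x \<in> X" "y \<in> X" "x < y" "theta X \<phi> x y = (a, b)"
  shows "a \<in> X" "b \<in> X" "a < b" "int_length X a b = int_length X x y"
    and "\<exists>k. k \<noteq> 0 \<and> \<phi> (inc_e x y) = (\<lambda>s t. k * inc_e a b s t)"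
proof -
  obtain k a' b' where m: "k \<noteq> 0" "a' \<in> X" "b' \<in> X" "a' < b'"
    "\<phi> (inc_e x y) = (\<lambda>s t. k * inc_e a' b' s t)"
    using inc_e_monomial[OF assms(1-3)] by blast
  have "(a, b) = (a', b')" using theta_eqI[of \<phi>, OF m(5,1-4)] assms(4) by simp
  then show "a \<in> X" "b \<in> X" "a < b" "\<exists>k. k \<noteq> 0 \<and> \<phi> (inc_e x y) = (\<lambda>s t. k * inc_e a b s t)"
    using m by auto
  have "\<phi> (inc_e x y) a b \<noteq> 0" using m \<open>(a, b) = (a', b')\<close> by (simp add: inc_e_def)
  then show "int_length X a b = int_length X x y"
    by (rule inc_e_support(1)[OF assms(1,2) less_imp_le[OF assms(3)]])
qed

lemma theta_compose:
  assumes "x \<in> X" "y \<in> X" "z \<in> X" "x < y" "y < z"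
    and "theta X \<phi> x y = (a, b)" "theta X \<phi> y z = (c, d)"
  shows "(b = c \<and> theta X \<phi> x z = (a, d)) \<or> (d = a \<and> theta X \<phi> x z = (c, b))"
proof -
  obtain k1 where k1: "\<phi> (inc_e x y) = (\<lambda>s t. k1 * inc_e a b s t)"
    using inc_e_theta(5)[OF assms(1,2,4,6)] by blast
  obtain k2 where k2: "\<phi> (inc_e y z) = (\<lambda>s t. k2 * inc_e c d s t)"
    using inc_e_theta(5)[OF assms(2,3,5,7)] by blast
  obtain p q where pq: "theta X \<phi> x z = (p, q)" by fastforce
  obtain k3 where k3: "k3 \<noteq> 0" "\<phi> (inc_e x z) = (\<lambda>s t. k3 * inc_e p q s t)"
    using inc_e_theta(5)[OF assms(1,3) order.strict_trans[OF assms(4,5)] pq] by blast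
  have exy: "inc_e x y \<in> incidence X" and eyz: "inc_e y z \<in> incidence X"
    using assms by (auto intro: inc_e_in_incidence)
  have "\<phi> (inc_e x z) = \<phi> (lie_bracket X (inc_e x y) (inc_e y z))"
    by (simp add: lie_bracket_inc_e_chain[OF finite assms(4,5,2)])
  also have "\<dots> = lie_bracket X (\<phi> (inc_e x y)) (\<phi> (inc_e y z))" by (rule bracket[OF exy eyz])
  also have "\<dots> = (\<lambda>s t. k1 * k2 * lie_bracket X (inc_e a b) (inc_e c d) s t)"
    unfolding k1 k2 by (rule lie_bracket_scale)
  finally have "k3 * inc_e p q p q = k1 * k2 * lie_bracket X (inc_e a b) (inc_e c d) p q"
    unfolding k3(2) by (rule fun_cong[OF fun_cong])
  then have "lie_bracket X (inc_e a b) (inc_e c d) p q \<noteq> (0 :: 'k)"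
    using k3(1) by auto
  then show ?thesis using lie_bracket_inc_e_nonzero[OF finite] pq by blast
qed

lemma theta_shared_vertex:
  assumes "x \<in> X" "y \<in> X" "x < y" "x' \<in> X" "y' \<in> X" "x' < y'"
    and "theta X \<phi> x y = (a, b)" "theta X \<phi> x' y' = (b, d)"
  shows "y = x' \<or> y' = x"
proof (rule ccontr)
  assume "\<not> (y = x' \<or> y' = x)"
  then have "y \<noteq> x'" "y' \<noteq> x" by auto
  obtain k1 where k1: "k1 \<noteq> 0" "\<phi> (inc_e x y) = (\<lambda>s t. k1 * inc_e a b s t)"
    using inc_e_theta(5)[OF assms(1-3,7)] by blast
  obtain k2 where k2: "k2 \<noteq> 0" "\<phi> (inc_e x' y') = (\<lambda>s t. k2 * inc_e b d s t)"
    using inc_e_theta(5)[OF assms(4-6,8)] by blast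
  have exy: "inc_e x y \<in> incidence X" and exy': "inc_e x' y' \<in> incidence X"
    using assms by (auto intro: inc_e_in_incidence)
  have "(\<lambda>s t. 0) = \<phi> (lie_bracket X (inc_e x y) (inc_e x' y'))"
    by (simp add: lie_bracket_inc_e_apart[OF finite \<open>y \<noteq> x'\<close> \<open>y' \<noteq> x\<close>] zero)
  also have "\<dots> = (\<lambda>s t. k1 * k2 * lie_bracket X (inc_e a b) (inc_e b d) s t)"
    unfolding bracket[OF exy exy'] k1(2) k2(2) by (rule lie_bracket_scale)
  also have "\<dots> = (\<lambda>s t. k1 * k2 * inc_e a d s t)"
    by (simp add: lie_bracket_inc_e_chain[OF finite inc_e_theta(3)[OF assms(1-3,7)]
        inc_e_theta(3)[OF assms(4-6,8)] inc_e_theta(2)[OF assms(1-3,7)]])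
  finally have "0 = k1 * k2 * inc_e a d a d" by (rule fun_cong[OF fun_cong])
  then show False using k1(1) k2(1) by simp
qed

lemma theta_surj:
  assumes "a \<in> X" "b \<in> X" "a < b"
  obtains x y where "x \<in> X" "y \<in> X" "x < y" "theta X \<phi> x y = (a, b)"
proof -
  obtain g where g: "g \<in> incidence X" "\<phi> g = inc_e a b"
    using surj[OF inc_e_in_incidence[OF assms(1,2) less_imp_le[OF assms(3)]]] by blast
  have "(\<Sum>p\<in>{(x, y). x \<in> X \<and> y \<in> X \<and> x \<le> y}. g (fst p) (snd p) * \<phi> (inc_e (fst p) (snd p)) a b) = 1"
    using expansion[OF g(1), of a b] g(2) by simp
  then obtain p where p: "p \<in> {(x, y). x \<in> X \<and> y \<in> X \<and> x \<le> y}"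
      "g (fst p) (snd p) * \<phi> (inc_e (fst p) (snd p)) a b \<noteq> 0"
    by (metis (no_types, lifting) sum.neutral zero_neq_one)
  obtain x y where "p = (x, y)" by fastforce
  then have xy: "x \<in> X" "y \<in> X" "x \<le> y" "\<phi> (inc_e x y) a b \<noteq> 0" using p by auto
  have "x < y" using xy inc_e_refl_off_diagonal assms(3) by (metis order.order_iff_strict order.irrefl)
  obtain c d where cd: "theta X \<phi> x y = (c, d)" by fastforce
  obtain k where "\<phi> (inc_e x y) = (\<lambda>s t. k * inc_e c d s t)"
    using inc_e_theta(5)[OF xy(1,2) \<open>x < y\<close> cd] by blast
  then have "(c, d) = (a, b)" using xy(4) by (auto simp: inc_e_def split: if_splits)
  then show thesis using that xy(1,2) \<open>x < y\<close> cd by simp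
qed

lemma theta_covers:
  assumes "covers X x y" "theta X \<phi> x y = (a, b)"
  shows "covers X a b"
proof -
  have xy: "x \<in> X" "y \<in> X" "x < y" using assms(1) unfolding covers_def by auto
  note ab = inc_e_theta[OF xy assms(2)]
  show ?thesis
    using int_length_eq_1_iff_covers[OF finite xy] int_length_eq_1_iff_covers[OF finite ab(1-3)] ab(4) assms(1)
    by simp
qed

lemma theta_extremal:
  assumes "x \<in> X" "y \<in> X" "x < y" "\<forall>z\<in>X. \<not> z < x" "\<forall>z\<in>X. \<not> y < z"
    and "theta X \<phi> x y = (a, b)"
  shows "\<forall>z\<in>X. \<not> z < a" "\<forall>z\<in>X. \<not> b < z"
proof -
  note ab = inc_e_theta(1-3)[OF assms(1-3,6)]
  show "\<forall>z\<in>X. \<not> z < a"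
  proof (intro ballI notI)
    fix z assume "z \<in> X" "z < a"
    then obtain x' y' where "x' \<in> X" "y' \<in> X" "x' < y'" "theta X \<phi> x' y' = (z, a)"
      using theta_surj ab(1) by metis
    then have "y' = x \<or> y = x'" using theta_shared_vertex[OF _ _ _ assms(1-3)] assms(6) by metis
    then show False using assms(3-5) \<open>x' \<in> X\<close> \<open>y' \<in> X\<close> \<open>x' < y'\<close> by auto
  qed
  show "\<forall>z\<in>X. \<not> b < z"
  proof (intro ballI notI)
    fix z assume "z \<in> X" "b < z"
    then obtain x' y' where "x' \<in> X" "y' \<in> X" "x' < y'" "theta X \<phi> x' y' = (b, z)"
      using theta_surj ab(2) by metis
    then have "y = x' \<or> y' = x" using theta_shared_vertex[OF assms(1-3)] assms(6) by metis
    then show False using assms(3-5) \<open>x' \<in> X\<close> \<open>y' \<in> X\<close> \<open>x' < y'\<close> by auto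
  qed
qed

lemma theta_composable_pairs:
  assumes "sorted_wrt (<) us" "set us \<subseteq> X"
  shows "composable_pairs (\<lambda>i j. theta X \<phi> (us ! i) (us ! j)) (length us)"
proof
  have mem: "us ! i \<in> X" if "i < length us" for i using assms(2) that by auto
  have less: "us ! i < us ! j" if "i < j" "j < length us" for i j
    using sorted_wrt_nth_less[OF assms(1) that] .
  show "fst (theta X \<phi> (us ! i) (us ! j)) \<noteq> snd (theta X \<phi> (us ! i) (us ! j))"
    if "i < j" "j < length us" for i j
    using inc_e_theta(3)[OF mem mem less[OF that] prod.collapse[symmetric]] that by simp
  show "(snd (theta X \<phi> (us ! i) (us ! j)) = fst (theta X \<phi> (us ! j) (us ! k)) \<and>
      theta X \<phi> (us ! i) (us ! k) = (fst (theta X \<phi> (us ! i) (us ! j)), snd (theta X \<phi> (us ! j) (us ! k)))) \<or>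
    (snd (theta X \<phi> (us ! j) (us ! k)) = fst (theta X \<phi> (us ! i) (us ! j)) \<and>
      theta X \<phi> (us ! i) (us ! k) = (fst (theta X \<phi> (us ! j) (us ! k)), snd (theta X \<phi> (us ! i) (us ! j))))"
    if "i < j" "j < k" "k < length us" for i j k
    using theta_compose[OF mem mem mem less less prod.collapse[symmetric] prod.collapse[symmetric]] that
    by simp
qed

lemma maximal_chain_theta_image:
  assumes us: "maximal_chain X us" "2 \<le> length us" and len: "length vs = length us"
    and consecutive: "\<And>i. Suc i < length vs \<Longrightarrow>
      \<exists>j. Suc j < length us \<and> theta X \<phi> (us ! j) (us ! Suc j) = (vs ! i, vs ! Suc i)"
    and ends: "theta X \<phi> (hd us) (last us) = (hd vs, last vs)"
  shows "maximal_chain X vs"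
proof (rule maximal_chainI_covers)
  show covers: "\<forall>i. Suc i < length vs \<longrightarrow> covers X (vs ! i) (vs ! Suc i)"
    using consecutive theta_covers maximal_chain_covers[OF us(1)] by metis
  show "vs \<noteq> []" using len us(2) by auto
  show "set vs \<subseteq> X"
  proof
    fix v assume "v \<in> set vs"
    then obtain i where i: "i < length vs" "v = vs ! i" by (auto simp: in_set_conv_nth)
    show "v \<in> X"
    proof (cases "Suc i < length vs")
      case True
      then show ?thesis using covers i(2) unfolding covers_def by blast
    next
      case False
      then have "Suc (i - 1) < length vs" "i = Suc (i - 1)" using i(1) len us(2) by auto
      then show ?thesis using covers i(2) unfolding covers_def by metis
    qed
  qed
  have sorted: "sorted_wrt (<) us" and "set us \<subseteq> X" using us(1) by (simp_all add: maximal_chain_iff)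
  moreover have "us \<noteq> []" using us(2) by auto
  ultimately have "hd us \<in> X" "last us \<in> X" "hd us < last us"
    using sorted_wrt_nth_less[OF sorted, of 0 "length us - 1"] us(2) by (auto simp: hd_conv_nth last_conv_nth)
  note extremal = theta_extremal[OF this maximal_chain_hd_minimal[OF us(1) \<open>us \<noteq> []\<close>]
      maximal_chain_last_maximal[OF us(1) \<open>us \<noteq> []\<close>] ends]
  show "\<forall>z\<in>X. \<not> z < hd vs" "\<forall>z\<in>X. \<not> last vs < z"
    using extremal by blast+
qed

lemma theta_forward_maximal_chain:
  assumes "maximal_chain X us" "2 \<le> length us"
    and w: "\<forall>i j. i < j \<and> j < length us \<longrightarrow> theta X \<phi> (us ! i) (us ! j) = (w i, w j)"
  shows "maximal_chain X (map w [0..<length us])"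
proof (rule maximal_chain_theta_image[OF assms(1,2)])
  show "\<exists>j. Suc j < length us \<and> theta X \<phi> (us ! j) (us ! Suc j) = (map w [0..<length us] ! i, map w [0..<length us] ! Suc i)"
    if "Suc i < length (map w [0..<length us])" for i
    using w that by auto
  have "us \<noteq> []" using assms(2) by auto
  then show "theta X \<phi> (hd us) (last us) = (hd (map w [0..<length us]), last (map w [0..<length us]))"
    using w assms(2) by (auto simp: hd_conv_nth last_conv_nth hd_map last_map)
qed simp

lemma theta_backward_maximal_chain:
  assumes "maximal_chain X us" "2 \<le> length us"
    and w: "\<forall>i j. i < j \<and> j < length us \<longrightarrow> theta X \<phi> (us ! i) (us ! j) = (w j, w i)"
  shows "maximal_chain X (rev (map w [0..<length us]))"
proof (rule maximal_chain_theta_image[OF assms(1,2)])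
  let ?vs = "rev (map w [0..<length us])"
  show "\<exists>j. Suc j < length us \<and> theta X \<phi> (us ! j) (us ! Suc j) = (?vs ! i, ?vs ! Suc i)"
    if "Suc i < length ?vs" for i
  proof (intro exI conjI)
    show "Suc (length us - 2 - i) < length us" using that by simp
    have "length us - Suc (Suc i) < length us - Suc i" "length us - Suc i < length us"
      using that by simp_all
    then show "theta X \<phi> (us ! (length us - 2 - i)) (us ! Suc (length us - 2 - i)) = (?vs ! i, ?vs ! Suc i)"
      using w that by (auto simp: rev_nth Suc_diff_Suc numeral_2_eq_2)
  qed
  have "us \<noteq> []" using assms(2) by auto
  then show "theta X \<phi> (hd us) (last us) = (hd ?vs, last ?vs)"
    using w assms(2) by (auto simp: hd_conv_nth last_conv_nth hd_rev last_rev)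
qed simp

end

theorem lemma5p4:
  fixes X :: "'a::order set" and \<phi> :: "('a \<Rightarrow> 'a \<Rightarrow> 'k::field) \<Rightarrow> ('a \<Rightarrow> 'a \<Rightarrow> 'k)"
    and us :: "'a list"
  assumes "finite X" and "poset_connected X" and "elementary X \<phi>"
    and "maximal_chain X us"
  shows "\<exists>vs. length vs = length us \<and> maximal_chain X vs \<and>
    ((\<forall>i j. i < j \<and> j < length us \<longrightarrow> theta X \<phi> (us ! i) (us ! j) = (vs ! i, vs ! j)) \<or>
     (\<forall>i j. i < j \<and> j < length us \<longrightarrow>
        theta X \<phi> (us ! i) (us ! j) = (vs ! (length us - 1 - j), vs ! (length us - 1 - i))))"
proof -
  obtain \<psi> where "\<forall>f\<in>incidence X. \<phi> f = tilde X \<psi> f" and "is_lie_aut X \<phi>"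
    using assms(3) unfolding elementary_def by blast
  then interpret elementary_lie_aut X \<phi> \<psi> using assms(1) by unfold_locales auto
  show ?thesis
  proof (cases "length us < 2")
    case True
    then show ?thesis using assms(4) by (intro exI[of _ us]) auto
  next
    case False
    let ?m = "length us"
    interpret composable_pairs "\<lambda>i j. theta X \<phi> (us ! i) (us ! j)" ?m
      using assms(4) by (intro theta_composable_pairs) (simp_all add: maximal_chain_iff)
    from forward_or_backward[OF order_refl] show ?thesis
      unfolding forward_on_def backward_on_def
    proof (elim disjE exE)
      fix w assume w: "\<forall>i j. i < j \<and> j < ?m \<longrightarrow> theta X \<phi> (us ! i) (us ! j) = (w i, w j)"
      show ?thesis
        using theta_forward_maximal_chain[OF assms(4) _ w] w False
        by (intro exI[of _ "map w [0..<?m]"]) auto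
    next
      fix w assume w: "\<forall>i j. i < j \<and> j < ?m \<longrightarrow> theta X \<phi> (us ! i) (us ! j) = (w j, w i)"
      show ?thesis
        using theta_backward_maximal_chain[OF assms(4) _ w] w False
        by (intro exI[of _ "rev (map w [0..<?m])"]) (auto simp: rev_nth)
    qed
  qed
qed

end
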